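(* The real hyperplanes in $\mathbb{P}^{n+1}$ that are evenly tangent to $\Sigma$ constitute (several) real one-dimensional families parameterized by $S^1$, and there is a natural one-to-one correspondence between the set of such $S^1$-families and the set of divisions of the $2n$ generating lines of ${\rm C}(\Lambda)$ over the points $a_1,\dots,a_{2n}$ into two sets of $n$ lines each.
   Context: Fix $n\ge2$, reals $a_1<\dots<a_{2n}$, $f(z)=\prod_{i=1}^{2n}(z-a_i)$. Let $\Lambda\subset\mathbb{P}^n$ be a rational normal curve of degree $n$ with affine coordinate $z$, ${\rm C}(\Lambda)\subset\mathbb{P}^{n+1}$ the projective cone over $\Lambda$; identifying ${\rm C}(\Lambda)$ minus its vertex with the total space of $\mathscr O_\Lambda(n)$ with fiber coordinate $v$, let $\Sigma=\{v^2=f(z)\}$, a hyperelliptic curve of genus $n-1$ and degree $2n$ not through the vertex. The real structure on $\mathbb{P}^{n+1}$ is the one inducing $(v,z)\mapsto((-1)^n\bar v,\bar z)$ on the cone (complex conjugation on $\Lambda$). A hyperplane $h\subset\mathbb{P}^{n+1}$ is evenly tangent to $\Sigma$ if $h$ is tangent to $\Sigma$ at every intersection point and the contact order is even at each of them. *)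

theory Defs
  imports "HOL-Complex_Analysis.Complex_Analysis" "HOL-Computational_Algebra.Polynomial"
begin

text \<open>Coordinates on P^(n+1): (x_0,...,x_n, y); the cone C(Lambda) is the set of points
  (s^n, s^(n-1) t, ..., t^n, y).  A hyperplane is given (up to a nonzero scalar) by a
  linear form  sum_k h k * x_k + c * y, represented by the pair (h, c), with h k = 0 for k > n.\<close>

type_synonym hyp = "(nat \<Rightarrow> complex) \<times> complex"

definition is_hyp :: "nat \<Rightarrow> hyp \<Rightarrow> bool" where
  "is_hyp n H \<longleftrightarrow> (\<forall>k>n. fst H k = 0) \<and> ((\<exists>k\<le>n. fst H k \<noteq> 0) \<or> snd H \<noteq> 0)"

definition proj_eq :: "hyp \<Rightarrow> hyp \<Rightarrow> bool" where
  "proj_eq H H' \<longleftrightarrow> (\<exists>l::complex. l \<noteq> 0 \<and> fst H' = (\<lambda>k. l * fst H k) \<and> snd H' = l * snd H)"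

text \<open>Real structure: x_k \<mapsto> conj x_k, y \<mapsto> (-1)^n conj y (this induces
  (v,z) \<mapsto> ((-1)^n conj v, conj z) on the cone).  A hyperplane is real iff it is
  invariant, i.e. its conjugated equation is proportional to the original one.\<close>
definition real_hyp :: "nat \<Rightarrow> hyp \<Rightarrow> bool" where
  "real_hyp n H \<longleftrightarrow> (\<exists>l::complex. l \<noteq> 0 \<and> (\<forall>k. cnj (fst H k) = l * fst H k)
                                  \<and> (-1)^n * cnj (snd H) = l * snd H)"

text \<open>Sigma in the affine chart s = 1 (z = t/s, v = y): v^2 = f(z).\<close>
definition SigmaA :: "nat \<Rightarrow> (nat \<Rightarrow> real) \<Rightarrow> complex \<Rightarrow> complex \<Rightarrow> complex" where
  "SigmaA n a z v = v^2 - (\<Prod>i\<in>{1..2*n}. (z - complex_of_real (a i)))"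

text \<open>Sigma in the chart t = 1 (w = s/t = 1/z, u = y = v/z^n): u^2 = prod (1 - a_i w).
  Its points at infinity are w = 0, u = +-1.\<close>
definition SigmaB :: "nat \<Rightarrow> (nat \<Rightarrow> real) \<Rightarrow> complex \<Rightarrow> complex \<Rightarrow> complex" where
  "SigmaB n a w u = u^2 - (\<Prod>i\<in>{1..2*n}. (1 - complex_of_real (a i) * w))"

definition LA :: "nat \<Rightarrow> hyp \<Rightarrow> complex \<Rightarrow> complex \<Rightarrow> complex" where
  "LA n H z v = (\<Sum>k\<le>n. fst H k * z^k) + snd H * v"

definition LB :: "nat \<Rightarrow> hyp \<Rightarrow> complex \<Rightarrow> complex \<Rightarrow> complex" where
  "LB n H w u = (\<Sum>k\<le>n. fst H k * w^(n-k)) + snd H * u"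

definition local_param ::
  "(complex \<Rightarrow> complex \<Rightarrow> complex) \<Rightarrow> complex \<times> complex \<Rightarrow>
   (complex \<Rightarrow> complex) \<Rightarrow> (complex \<Rightarrow> complex) \<Rightarrow> real \<Rightarrow> bool" where
  "local_param Phi P g1 g2 r \<longleftrightarrow>
     r > 0 \<and> g1 holomorphic_on ball 0 r \<and> g2 holomorphic_on ball 0 r \<and>
     (g1 0, g2 0) = P \<and> (\<forall>t\<in>ball 0 r. Phi (g1 t) (g2 t) = 0) \<and>
     (deriv g1 0 \<noteq> 0 \<or> deriv g2 0 \<noteq> 0)"

definition contact_order ::
  "(complex \<Rightarrow> complex \<Rightarrow> complex) \<Rightarrow> (complex \<Rightarrow> complex \<Rightarrow> complex) \<Rightarrow>
   complex \<times> complex \<Rightarrow> nat \<Rightarrow> bool" where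
  "contact_order Phi L P k \<longleftrightarrow>
     (\<exists>g1 g2 r g. local_param Phi P g1 g2 r \<and> g holomorphic_on ball 0 r \<and> g 0 \<noteq> 0 \<and>
        (\<forall>t\<in>ball 0 r. L (g1 t) (g2 t) = t^k * g t))"

definition evenly_tangent :: "nat \<Rightarrow> (nat \<Rightarrow> real) \<Rightarrow> hyp \<Rightarrow> bool" where
  "evenly_tangent n a H \<longleftrightarrow>
     (\<forall>z v. SigmaA n a z v = 0 \<and> LA n H z v = 0 \<longrightarrow>
        (\<exists>k. k \<ge> 2 \<and> even k \<and> contact_order (SigmaA n a) (LA n H) (z, v) k)) \<and>
     (\<forall>u. SigmaB n a 0 u = 0 \<and> LB n H 0 u = 0 \<longrightarrow>
        (\<exists>k. k \<ge> 2 \<and> even k \<and> contact_order (SigmaB n a) (LB n H) (0, u) k))"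

definition divisions :: "nat \<Rightarrow> nat set set set" where
  "divisions n = {{S, {1..2*n} - S} | S. S \<subseteq> {1..2*n} \<and> card S = n}"

text \<open>The hyperplane through the vertex spanned by the generating lines over a_i, i in S:
  its equation is prod_{i in S} (z - a_i) = 0.\<close>
definition vertex_hyp :: "nat \<Rightarrow> (nat \<Rightarrow> real) \<Rightarrow> nat set \<Rightarrow> hyp" where
  "vertex_hyp n a S = ((\<lambda>k. coeff (\<Prod>i\<in>S. [:- complex_of_real (a i), 1:]) k), 0)"

end

theory Submission
  imports Defs "HOL-Computational_Algebra.Fundamental_Theorem_Algebra"
begin

text \<open>A hyperplane not through the vertex is \<open>P(z) + c v = 0\<close> with \<open>deg P \<le> n\<close> and \<open>c \<noteq> 0\<close>.
  Away from the branch points the contact order of such a hyperplane with \<open>\<Sigma>\<close> at a point over \<open>z\<close>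
  is the multiplicity of \<open>z\<close> as a root of \<open>P\<^sup>2 - c\<^sup>2 f\<close>, while at a branch point it is \<open>1\<close>.
  So the hyperplane is evenly tangent iff \<open>P\<^sup>2 - c\<^sup>2 f = M\<^sup>2\<close> with \<open>M\<close> coprime to \<open>f\<close>.
  Then \<open>(P + M)(P - M) = c\<^sup>2 f\<close> splits the roots of \<open>f\<close> into two halves \<open>S\<close>, \<open>S\<^sup>c\<close>, and
  \<open>P = \<alpha> f\<^sub>S + \<beta> f\<^sub>S\<^sub>c\<close> with \<open>c\<^sup>2 = 4 \<alpha> \<beta>\<close>; conversely every such \<open>P\<close> satisfies the identity with
  \<open>M = \<alpha> f\<^sub>S - \<beta> f\<^sub>S\<^sub>c\<close>. Up to scaling, the real solutions of \<open>c\<^sup>2 = 4 \<alpha> \<beta>\<close> form a circle, whose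
  two points with \<open>c = 0\<close> are the hyperplanes through the vertex spanned by the lines over \<open>S\<close>
  and over \<open>S\<^sup>c\<close>.\<close>

section \<open>Contact order on the double cover \<open>v\<^sup>2 = \<phi>(z)\<close>\<close>

abbreviation curve_eqn :: "complex poly \<Rightarrow> complex \<Rightarrow> complex \<Rightarrow> complex" where
  "curve_eqn \<phi> \<equiv> \<lambda>z v. v^2 - poly \<phi> z"

abbreviation hyp_eqn :: "complex poly \<Rightarrow> complex \<Rightarrow> complex \<Rightarrow> complex \<Rightarrow> complex" where
  "hyp_eqn p c \<equiv> \<lambda>z v. poly p z + c * v"

lemma zero_order_unique:
  fixes g h :: "complex \<Rightarrow> complex"
  assumes "r > 0" "g holomorphic_on ball 0 r" "h holomorphic_on ball 0 r" "g 0 \<noteq> 0" "h 0 \<noteq> 0"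
    and "\<And>t. t \<in> ball 0 r \<Longrightarrow> t^m * g t = t^k * h t"
  shows "m = k"
proof -
  define F where "F t = t^m * g t" for t
  have "zorder F 0 = int m"
    by (rule zorder_eqI[of "ball 0 r" _ g]) (use assms(1-4) in \<open>auto simp: F_def mult.commute\<close>)
  moreover have "zorder F 0 = int k"
  proof (rule zorder_eqI[of "ball 0 r" _ h])
    show "F w = h w * (w - 0) powi int k" if "w \<in> ball 0 r" for w
      using assms(6)[OF that] by (simp add: F_def mult.commute)
  qed (use assms in auto)
  ultimately show ?thesis by simp
qed

lemma holomorphic_difference_quotient:
  fixes g :: "complex \<Rightarrow> complex"
  assumes "r > 0" "g holomorphic_on ball 0 r"
  obtains \<rho> where "\<rho> holomorphic_on ball 0 r" "\<rho> 0 = deriv g 0" "\<And>t. g t - g 0 = t * \<rho> t"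
proof
  define \<rho> where "\<rho> t = (if t = 0 then deriv g 0 else (g t - g 0) / (t - 0))" for t
  show "\<rho> holomorphic_on ball 0 r"
    unfolding \<rho>_def by (rule pole_lemma[OF assms(2)]) (use assms(1) in simp)
  show "\<rho> 0 = deriv g 0" "g t - g 0 = t * \<rho> t" for t
    by (simp_all add: \<rho>_def)
qed

lemma poly_comp_holomorphic_order:
  fixes p :: "complex poly" and g :: "complex \<Rightarrow> complex"
  assumes r: "r > 0" and g: "g holomorphic_on ball 0 r" "g 0 = z0" "deriv g 0 \<noteq> 0" and p: "p \<noteq> 0"
  obtains s where "s holomorphic_on ball 0 r" "s 0 \<noteq> 0"
    "\<And>t. t \<in> ball 0 r \<Longrightarrow> poly p (g t) = t ^ order z0 p * s t"
proof -
  obtain q where pq: "p = [:-z0, 1:] ^ order z0 p * q" and "\<not> [:-z0, 1:] dvd q"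
    using order_decomp[OF p] by blast
  then have q0: "poly q z0 \<noteq> 0" by (simp add: poly_eq_0_iff_dvd)
  obtain \<rho> where \<rho>: "\<rho> holomorphic_on ball 0 r" "\<rho> 0 = deriv g 0" "\<And>t. g t - g 0 = t * \<rho> t"
    using holomorphic_difference_quotient[OF r g(1)] by blast
  define s where "s t = \<rho> t ^ order z0 p * poly q (g t)" for t
  show ?thesis
  proof
    show "s holomorphic_on ball 0 r" unfolding s_def by (intro holomorphic_intros \<rho>(1) g(1))
    show "s 0 \<noteq> 0" using q0 g \<rho>(2) by (simp add: s_def)
    have "poly p (g t) = (g t - z0) ^ order z0 p * poly q (g t)" for t
      by (subst pq) simp
    then show "poly p (g t) = t ^ order z0 p * s t" for t
      using \<rho>(3)[of t] g(2) by (simp add: s_def power_mult_distrib)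
  qed
qed

lemma local_param_tangent:
  assumes "local_param (curve_eqn \<phi>) (z0, v0) g1 g2 r"
  shows "2 * v0 * deriv g2 0 = poly (pderiv \<phi>) z0 * deriv g1 0"
proof -
  have r: "r > 0" and hol: "g1 holomorphic_on ball 0 r" "g2 holomorphic_on ball 0 r"
    and init: "g1 0 = z0" "g2 0 = v0" and on: "\<And>t. t \<in> ball 0 r \<Longrightarrow> g2 t ^ 2 - poly \<phi> (g1 t) = 0"
    using assms by (auto simp: local_param_def)
  have ball: "open (ball (0::complex) r)" "0 \<in> ball (0::complex) r" using r by auto
  have "((\<lambda>t. g2 t ^ 2 - poly \<phi> (g1 t)) has_field_derivative
      2 * g2 0 * deriv g2 0 - poly (pderiv \<phi>) (g1 0) * deriv g1 0) (at 0)"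
    using holomorphic_derivI[OF hol(1) ball] holomorphic_derivI[OF hol(2) ball]
    by (auto intro!: derivative_eq_intros DERIV_chain2[OF poly_DERIV])
  moreover have "((\<lambda>t. g2 t ^ 2 - poly \<phi> (g1 t)) has_field_derivative 0) (at 0)"
    by (rule has_field_derivative_transform_within_open[OF DERIV_const ball]) (use on in auto)
  ultimately show ?thesis using DERIV_unique init by fastforce
qed

lemma local_sqrt_branch:
  fixes \<phi> :: "complex poly"
  assumes v0: "v0 \<noteq> 0" "v0^2 = poly \<phi> z0"
  obtains r g where "r > 0" "g holomorphic_on ball 0 r" "g 0 = v0" "\<And>t. g t ^ 2 = poly \<phi> (z0 + t)"
proof -
  define \<psi> where "\<psi> t = poly \<phi> (z0 + t) / v0^2" for t
  have \<psi>0: "\<psi> 0 = 1" using v0 by (simp add: \<psi>_def v0(2)[symmetric])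
  have "isCont \<psi> 0" unfolding \<psi>_def by (intro continuous_intros) (use v0(1) in simp)
  then have "\<forall>\<^sub>F t in nhds 0. \<psi> t \<in> - \<real>\<^sub>\<le>\<^sub>0"
    using \<psi>0 unfolding isCont_def tendsto_at_iff_tendsto_nhds by (intro topological_tendstoD) auto
  then obtain r where r: "r > 0" and near: "\<And>t. t \<in> ball 0 r \<Longrightarrow> \<psi> t \<notin> \<real>\<^sub>\<le>\<^sub>0"
    unfolding eventually_nhds_metric by (auto simp: dist_commute)
  show ?thesis
  proof
    show "(\<lambda>t. v0 * csqrt (\<psi> t)) holomorphic_on ball 0 r"
      unfolding \<psi>_def using near
      by (intro holomorphic_intros holomorphic_on_csqrt') (auto simp: \<psi>_def intro!: holomorphic_intros)
    show "v0 * csqrt (\<psi> 0) = v0" by (simp add: \<psi>0)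
    show "(v0 * csqrt (\<psi> t))^2 = poly \<phi> (z0 + t)" for t
      using v0(1) by (simp add: \<psi>_def power_mult_distrib)
  qed (rule r)
qed

text \<open>Off the branch points the curve is the graph of a holomorphic branch \<open>g\<close> of \<open>\<surd>\<phi>\<close>, and
  \<open>(p + c g)(p - c g) = p\<^sup>2 - c\<^sup>2 \<phi>\<close> where the second factor does not vanish at the point.\<close>

lemma contact_order_offbranch:
  fixes \<phi> p :: "complex poly" and c :: complex
  defines "R \<equiv> p^2 - smult (c^2) \<phi>"
  assumes c: "c \<noteq> 0" and v0: "v0 \<noteq> 0" "v0^2 = poly \<phi> z0" and meet: "poly p z0 + c * v0 = 0"
    and R: "R \<noteq> 0"
  shows "contact_order (curve_eqn \<phi>) (hyp_eqn p c) (z0, v0) (order z0 R)"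
proof -
  obtain r1 g where r1: "r1 > 0" and g: "g holomorphic_on ball 0 r1" "g 0 = v0"
    "\<And>t. g t ^ 2 = poly \<phi> (z0 + t)"
    using local_sqrt_branch[OF v0] by blast
  define L' where "L' t = poly p (z0 + t) - c * g t" for t
  have "isCont g 0"
    using continuous_on_interior[OF holomorphic_on_imp_continuous_on[OF g(1)], of 0] r1 by simp
  then have "isCont L' 0" unfolding L'_def by (intro continuous_intros)
  moreover have "L' 0 = - 2 * c * v0"
    using meet g(2) by (simp add: L'_def algebra_simps eq_neg_iff_add_eq_0)
  ultimately obtain \<epsilon> where "\<epsilon> > 0" and \<epsilon>: "\<And>t. dist 0 t < \<epsilon> \<Longrightarrow> L' t \<noteq> 0"
    using continuous_at_avoid[of 0 L' 0] c v0 by auto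
  define r where "r = min r1 \<epsilon>"
  have r: "r > 0" using r1 \<open>\<epsilon> > 0\<close> by (simp add: r_def)
  have hol_g: "g holomorphic_on ball 0 r" using g(1) by (rule holomorphic_on_subset) (simp add: r_def subset_ball)
  have L'_nz: "L' t \<noteq> 0" if "t \<in> ball 0 r" for t using that \<epsilon> by (simp add: r_def)
  have hol_shift: "(\<lambda>t. z0 + t) holomorphic_on ball 0 r" by (intro holomorphic_intros)
  have deriv_shift: "deriv (\<lambda>t. z0 + t) 0 = 1"
    by (rule DERIV_imp_deriv) (auto intro!: derivative_eq_intros)
  obtain s where s: "s holomorphic_on ball 0 r" "s 0 \<noteq> 0"
    "\<And>t. t \<in> ball 0 r \<Longrightarrow> poly R (z0 + t) = t ^ order z0 R * s t"
    using poly_comp_holomorphic_order[OF r hol_shift _ _ R] deriv_shift by auto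
  have "local_param (curve_eqn \<phi>) (z0, v0) (\<lambda>t. z0 + t) g r"
    unfolding local_param_def using r hol_shift hol_g g(2,3) deriv_shift by simp
  moreover have "(\<lambda>t. s t / L' t) holomorphic_on ball 0 r"
    using L'_nz unfolding L'_def by (intro holomorphic_intros s(1) hol_g) auto
  moreover have "s 0 / L' 0 \<noteq> 0" using s(2) L'_nz[of 0] r by simp
  moreover have "poly p (z0 + t) + c * g t = t ^ order z0 R * (s t / L' t)" if t: "t \<in> ball 0 r" for t
  proof -
    have "(poly p (z0 + t) + c * g t) * L' t = poly p (z0 + t) ^ 2 - c^2 * g t ^ 2"
      by (simp add: L'_def algebra_simps power2_eq_square)
    also have "\<dots> = poly R (z0 + t)" by (simp add: R_def g(3))
    finally show ?thesis using s(3)[OF t] L'_nz[OF t] by (simp add: field_simps)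
  qed
  ultimately show ?thesis unfolding contact_order_def by blast
qed

lemma contact_order_offbranch_unique:
  fixes \<phi> p :: "complex poly" and c :: complex
  defines "R \<equiv> p^2 - smult (c^2) \<phi>"
  assumes c: "c \<noteq> 0" and v0: "v0 \<noteq> 0" and meet: "poly p z0 + c * v0 = 0" and R: "R \<noteq> 0"
    and k: "contact_order (curve_eqn \<phi>) (hyp_eqn p c) (z0, v0) k"
  shows "k = order z0 R"
proof -
  obtain g1 g2 r g where param: "local_param (curve_eqn \<phi>) (z0, v0) g1 g2 r"
    and g: "g holomorphic_on ball 0 r" "g 0 \<noteq> 0"
    and eq: "\<And>t. t \<in> ball 0 r \<Longrightarrow> poly p (g1 t) + c * g2 t = t^k * g t"
    using k unfolding contact_order_def by blast
  have r: "r > 0" and hol: "g1 holomorphic_on ball 0 r" "g2 holomorphic_on ball 0 r"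
    and init: "g1 0 = z0" "g2 0 = v0" and on: "\<And>t. t \<in> ball 0 r \<Longrightarrow> g2 t ^ 2 = poly \<phi> (g1 t)"
    and regular: "deriv g1 0 \<noteq> 0 \<or> deriv g2 0 \<noteq> 0"
    using param by (auto simp: local_param_def)
  have "deriv g1 0 \<noteq> 0"
    using local_param_tangent[OF param] regular v0 by auto
  then obtain s where s: "s holomorphic_on ball 0 r" "s 0 \<noteq> 0"
    "\<And>t. t \<in> ball 0 r \<Longrightarrow> poly R (g1 t) = t ^ order z0 R * s t"
    using poly_comp_holomorphic_order[OF r hol(1) init(1) _ R] by blast
  define h where "h t = g t * (poly p (g1 t) - c * g2 t)" for t
  have "h holomorphic_on ball 0 r" unfolding h_def by (intro holomorphic_intros g(1) hol)
  moreover have "h 0 \<noteq> 0"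
  proof -
    have "poly p z0 = - (c * v0)" using meet by (simp add: eq_neg_iff_add_eq_0)
    then have "h 0 = - 2 * c * v0 * g 0" using init by (simp add: h_def)
    then show ?thesis using c v0 g(2) by simp
  qed
  moreover have "t ^ order z0 R * s t = t^k * h t" if t: "t \<in> ball 0 r" for t
  proof -
    have "poly R (g1 t) = (poly p (g1 t) + c * g2 t) * (poly p (g1 t) - c * g2 t)"
      by (simp add: R_def on[OF t, symmetric] algebra_simps power2_eq_square)
    then show ?thesis using s(3)[OF t] eq[OF t] by (simp add: h_def)
  qed
  ultimately show ?thesis using zero_order_unique[OF r s(1) _ s(2)] by metis
qed

lemma holomorphic_local_inverse:
  fixes f :: "complex \<Rightarrow> complex"
  assumes f: "f holomorphic_on UNIV" and df: "deriv f z0 \<noteq> 0"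
  obtains r \<psi> where "r > 0" "\<psi> holomorphic_on ball (f z0) r" "\<psi> (f z0) = z0"
    "deriv \<psi> (f z0) \<noteq> 0" "\<And>w. w \<in> ball (f z0) r \<Longrightarrow> f (\<psi> w) = w"
proof -
  obtain \<rho> where "\<rho> > 0" and inj: "inj_on f (ball z0 \<rho>)"
    using has_complex_derivative_locally_injective[OF f _ _ df] by auto
  define B where "B = ball z0 \<rho>"
  have hol_B: "f holomorphic_on B" using f holomorphic_on_subset by blast
  obtain \<psi> where \<psi>: "\<psi> holomorphic_on f ` B" "\<And>z. z \<in> B \<Longrightarrow> deriv f z * deriv \<psi> (f z) = 1"
    "\<And>z. z \<in> B \<Longrightarrow> \<psi> (f z) = z"
    using holomorphic_has_inverse[OF hol_B _ inj[folded B_def]] by (auto simp: B_def)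
  have z0: "z0 \<in> B" using \<open>\<rho> > 0\<close> by (simp add: B_def)
  have "open (f ` B)" using open_mapping_thm3[OF hol_B _ inj[folded B_def]] by (simp add: B_def)
  then obtain r where r: "r > 0" "ball (f z0) r \<subseteq> f ` B"
    using z0 open_contains_ball by blast
  show ?thesis
  proof
    show "\<psi> holomorphic_on ball (f z0) r" using holomorphic_on_subset[OF \<psi>(1) r(2)] .
    show "\<psi> (f z0) = z0" "deriv \<psi> (f z0) \<noteq> 0" using \<psi>(2,3)[OF z0] by auto
    show "f (\<psi> w) = w" if "w \<in> ball (f z0) r" for w
      using r(2) that \<psi>(3) by auto
  qed (use r in simp)
qed

text \<open>At a simple root \<open>a0\<close> of \<open>\<phi>\<close> the curve is parametrized by \<open>v = t\<close>, \<open>z = \<psi>(t\<^sup>2)\<close>, with \<open>\<psi>\<close>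
  a local inverse of \<open>\<phi>\<close>; so a hyperplane without \<open>v\<close>-term has doubled contact order there.\<close>

lemma contact_order_branch_point:
  fixes \<phi> p :: "complex poly"
  assumes \<phi>: "poly \<phi> a0 = 0" "poly (pderiv \<phi>) a0 \<noteq> 0" and p: "p \<noteq> 0"
  shows "contact_order (curve_eqn \<phi>) (hyp_eqn p 0) (a0, 0) (2 * order a0 p)"
proof -
  have "poly \<phi> holomorphic_on UNIV" by (intro holomorphic_intros)
  moreover have "deriv (poly \<phi>) a0 \<noteq> 0" using \<phi>(2) by (simp add: DERIV_imp_deriv[OF poly_DERIV])
  ultimately obtain r' \<psi> where r': "r' > 0" and \<psi>: "\<psi> holomorphic_on ball 0 r'" "\<psi> 0 = a0"
    "deriv \<psi> 0 \<noteq> 0" "\<And>w. w \<in> ball 0 r' \<Longrightarrow> poly \<phi> (\<psi> w) = w"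
    by (rule holomorphic_local_inverse[of "poly \<phi>" a0, unfolded \<phi>(1)]) blast
  obtain s where s: "s holomorphic_on ball 0 r'" "s 0 \<noteq> 0"
    "\<And>w. w \<in> ball 0 r' \<Longrightarrow> poly p (\<psi> w) = w ^ order a0 p * s w"
    using poly_comp_holomorphic_order[OF r' \<psi>(1-3) p] by blast
  define r where "r = min 1 r'"
  have r: "r > 0" using r' by (simp add: r_def)
  have sq: "t^2 \<in> ball 0 r'" if "t \<in> ball 0 r" for t :: complex
  proof -
    have "norm t < 1" "norm t < r'" using that by (auto simp: r_def)
    moreover have "norm t * norm t \<le> norm t"
      using \<open>norm t < 1\<close> by (intro mult_left_le_one_le) auto
    ultimately show ?thesis by (simp add: norm_mult power2_eq_square)
  qed
  then have sq_img: "(\<lambda>t. t^2) ` ball 0 r \<subseteq> ball (0::complex) r'" by blast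
  have hol_sq: "(\<lambda>t. t^2) holomorphic_on ball 0 r" by (intro holomorphic_intros)
  have "(\<lambda>t. \<psi> (t^2)) holomorphic_on ball 0 r"
    using holomorphic_on_compose_gen[OF hol_sq \<psi>(1) sq_img] by (simp add: o_def)
  moreover have "(\<lambda>t. s (t^2)) holomorphic_on ball 0 r"
    using holomorphic_on_compose_gen[OF hol_sq s(1) sq_img] by (simp add: o_def)
  moreover have "poly p (\<psi> (t^2)) = t ^ (2 * order a0 p) * s (t^2)" if "t \<in> ball 0 r" for t
    using s(3)[OF sq[OF that]] by (simp add: power_mult)
  ultimately show ?thesis
    unfolding contact_order_def local_param_def using r \<psi>(2,4) sq s(2)
    by (intro exI[of _ "\<lambda>t. \<psi> (t^2)"] exI[of _ "\<lambda>t. t"] exI[of _ r] exI[of _ "\<lambda>t. s (t^2)"]) auto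
qed

lemma contact_order_branch_point_less_2:
  fixes \<phi> p :: "complex poly"
  assumes c: "c \<noteq> 0" and \<phi>: "poly (pderiv \<phi>) a0 \<noteq> 0"
    and k: "contact_order (curve_eqn \<phi>) (hyp_eqn p c) (a0, 0) k"
  shows "k < 2"
proof (rule ccontr)
  assume "\<not> k < 2"
  obtain g1 g2 r g where param: "local_param (curve_eqn \<phi>) (a0, 0) g1 g2 r"
    and g: "g holomorphic_on ball 0 r"
    and eq: "\<And>t. t \<in> ball 0 r \<Longrightarrow> poly p (g1 t) + c * g2 t = t^k * g t"
    using k unfolding contact_order_def by blast
  have r: "r > 0" and hol: "g1 holomorphic_on ball 0 r" "g2 holomorphic_on ball 0 r"
    and regular: "deriv g1 0 \<noteq> 0 \<or> deriv g2 0 \<noteq> 0"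
    using param by (auto simp: local_param_def)
  have ball: "open (ball (0::complex) r)" "0 \<in> ball (0::complex) r" using r by auto
  have "deriv g1 0 = 0" using local_param_tangent[OF param] \<phi> by simp
  then have "deriv g2 0 \<noteq> 0" using regular by simp
  have "((\<lambda>t. poly p (g1 t) + c * g2 t) has_field_derivative
      poly (pderiv p) (g1 0) * deriv g1 0 + c * deriv g2 0) (at 0)"
    using holomorphic_derivI[OF hol(1) ball] holomorphic_derivI[OF hol(2) ball]
    by (auto intro!: derivative_eq_intros DERIV_chain2[OF poly_DERIV])
  moreover have "((\<lambda>t. t^k * g t) has_field_derivative 0) (at 0)"
    using holomorphic_derivI[OF g ball] \<open>\<not> k < 2\<close> by (auto intro!: derivative_eq_intros simp: power_0_left)
  then have "((\<lambda>t. poly p (g1 t) + c * g2 t) has_field_derivative 0) (at 0)"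
    by (rule has_field_derivative_transform_within_open[OF _ ball]) (use eq in auto)
  ultimately have "c * deriv g2 0 = 0"
    using DERIV_unique \<open>deriv g1 0 = 0\<close> by fastforce
  then show False using c \<open>deriv g2 0 \<noteq> 0\<close> by simp
qed

lemma square_identity_contact:
  fixes \<phi> p q :: "complex poly"
  assumes id: "p^2 - smult (c^2) \<phi> = q^2" and c: "c \<noteq> 0" and q: "q \<noteq> 0"
    and coprime: "\<And>z. poly \<phi> z = 0 \<Longrightarrow> poly q z \<noteq> 0"
    and on: "v^2 = poly \<phi> z" "poly p z + c * v = 0"
  shows "\<exists>k\<ge>2. even k \<and> contact_order (curve_eqn \<phi>) (hyp_eqn p c) (z, v) k"
proof -
  have id_z: "poly q z ^ 2 = (poly p z + c * v) * (poly p z - c * v)"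
    using arg_cong[OF id, of "\<lambda>r. poly r z"] on(1)
    by (simp add: algebra_simps power2_eq_square)
  have "v \<noteq> 0"
  proof
    assume "v = 0"
    then have "poly \<phi> z = 0" "poly q z = 0" using on id_z by auto
    then show False using coprime by blast
  qed
  have "order z q \<noteq> 0" using id_z on(2) q by (simp add: order_root)
  moreover have "order z (q^2) = 2 * order z q"
    using q by (simp add: power2_eq_square order_mult)
  ultimately show ?thesis
    using contact_order_offbranch[OF c \<open>v \<noteq> 0\<close> on] id q by (intro exI[of _ "order z (q^2)"]) auto
qed

section \<open>Polynomials with prescribed simple real roots\<close>

definition root_poly :: "(nat \<Rightarrow> real) \<Rightarrow> nat set \<Rightarrow> complex poly" where
  "root_poly a S = (\<Prod>i\<in>S. [:- complex_of_real (a i), 1:])"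

lemma poly_root_poly: "poly (root_poly a S) z = (\<Prod>i\<in>S. z - complex_of_real (a i))"
  by (simp add: root_poly_def poly_prod)

lemma root_poly_nonzero [simp]: "root_poly a S \<noteq> 0"
  unfolding root_poly_def by (cases "finite S") auto

lemma degree_root_poly: "finite S \<Longrightarrow> degree (root_poly a S) = card S"
  by (simp add: root_poly_def degree_prod_eq_sum_degree)

lemma lead_coeff_root_poly [simp]: "lead_coeff (root_poly a S) = 1"
  by (simp add: root_poly_def lead_coeff_prod)

lemma cnj_poly_root_poly [simp]: "cnj (poly (root_poly a S) z) = poly (root_poly a S) (cnj z)"
  by (simp add: poly_root_poly)

lemma poly_root_poly_eq_0_iff:
  "finite S \<Longrightarrow> poly (root_poly a S) z = 0 \<longleftrightarrow> (\<exists>i\<in>S. z = complex_of_real (a i))"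
  by (simp add: poly_root_poly)

lemma poly_root_poly_at_root_eq_0_iff:
  assumes "finite S" "S \<subseteq> I" "inj_on a I" "j \<in> I"
  shows "poly (root_poly a S) (complex_of_real (a j)) = 0 \<longleftrightarrow> j \<in> S"
  using assms by (auto simp: poly_root_poly_eq_0_iff dest: inj_onD)

lemma root_poly_insert:
  "finite S \<Longrightarrow> j \<notin> S \<Longrightarrow> root_poly a (insert j S) = [:- complex_of_real (a j), 1:] * root_poly a S"
  by (simp add: root_poly_def)

lemma root_poly_mult_complement:
  "S \<subseteq> I \<Longrightarrow> finite I \<Longrightarrow> root_poly a S * root_poly a (I - S) = root_poly a I"
  unfolding root_poly_def by (simp add: prod.subset_diff mult.commute)

lemma smult_root_poly_eqD:
  assumes "finite I" "inj_on a I" "S \<subseteq> I" "T \<subseteq> I" "u \<noteq> 0"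
    and eq: "smult u (root_poly a S) = smult w (root_poly a T)"
  shows "S = T \<and> u = w"
proof
  show "u = w" using arg_cong[OF eq, of lead_coeff] by (simp only: lead_coeff_smult) simp
  have fin: "finite S" "finite T" using assms(1,3,4) finite_subset by auto
  have "j \<in> S \<longleftrightarrow> j \<in> T" if "j \<in> I" for j
  proof -
    have "poly (root_poly a S) (of_real (a j)) = 0 \<longleftrightarrow> poly (root_poly a T) (of_real (a j)) = 0"
      using arg_cong[OF eq, of "\<lambda>p. poly p (of_real (a j))"] \<open>u = w\<close> assms(5) by auto
    then show ?thesis
      using poly_root_poly_at_root_eq_0_iff[OF fin(1) assms(3,2) that]
        poly_root_poly_at_root_eq_0_iff[OF fin(2) assms(4,2) that] by simp
  qed
  then show "S = T" using assms(3,4) by blast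
qed

lemma order_root_poly:
  assumes "finite I" "inj_on a I" "S \<subseteq> I" "j \<in> S"
  shows "order (complex_of_real (a j)) (root_poly a S) = 1"
proof -
  have fin: "finite (S - {j})" using assms(1,3) finite_subset by blast
  have split: "root_poly a S = [:- complex_of_real (a j), 1:] ^ 1 * root_poly a (S - {j})"
    using root_poly_insert[OF fin, of j a] assms(4) by (simp add: insert_absorb)
  have "poly (root_poly a (S - {j})) (complex_of_real (a j)) \<noteq> 0"
    using assms fin by (subst poly_root_poly_at_root_eq_0_iff[OF fin _ assms(2)]) auto
  then have "order (complex_of_real (a j)) (root_poly a (S - {j})) = 0" by (rule order_0I)
  moreover have "[:- complex_of_real (a j), 1:] ^ 1 * root_poly a (S - {j}) \<noteq> 0"
    by (rule no_zero_divisors) simp_all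
  ultimately show ?thesis
    unfolding split by (subst order_mult) (simp_all only: order_power_n_n, simp)
qed

lemma pderiv_root_poly_nonzero:
  assumes "finite I" "inj_on a I" "j \<in> I"
  shows "poly (pderiv (root_poly a I)) (complex_of_real (a j)) \<noteq> 0"
proof -
  have fin: "finite (I - {j})" using assms(1) by blast
  have "root_poly a I = [:- complex_of_real (a j), 1:] * root_poly a (I - {j})"
    using root_poly_insert[OF fin, of j a] assms(3) by (simp add: insert_absorb)
  then have "pderiv (root_poly a I) = [:- complex_of_real (a j), 1:] * pderiv (root_poly a (I - {j}))
      + root_poly a (I - {j}) * pderiv [:- complex_of_real (a j), 1:]"
    by (simp only: pderiv_mult)
  moreover have "pderiv [:- complex_of_real (a j), 1:] = 1" by (simp add: pderiv_pCons)
  ultimately have "poly (pderiv (root_poly a I)) (complex_of_real (a j)) = poly (root_poly a (I - {j})) (complex_of_real (a j))"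
    by simp
  also have "\<dots> \<noteq> 0" using assms fin by (subst poly_root_poly_at_root_eq_0_iff[OF fin _ assms(2)]) auto
  finally show ?thesis .
qed

lemma mult_eq_smult_root_poly_split:
  assumes "finite I" "inj_on a I" "A * B = smult \<kappa> (root_poly a I)" "\<kappa> \<noteq> 0"
  shows "\<exists>S\<subseteq>I. A = smult (lead_coeff A) (root_poly a S) \<and> B = smult (lead_coeff B) (root_poly a (I - S))"
  using assms
proof (induction I arbitrary: A B rule: finite_induct)
  case empty
  then have "A \<noteq> 0" "B \<noteq> 0" "degree (A * B) = 0" by (auto simp: root_poly_def)
  then have "degree A = 0" "degree B = 0" by (auto simp: degree_mult_eq)
  then show ?case by (auto simp: root_poly_def elim!: degree_eq_zeroE)
next
  case (insert j J)
  let ?x = "[:- complex_of_real (a j), 1:]" and ?I = "insert j J"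
  have inj: "inj_on a J" using insert.prems(1) by (rule inj_on_subset) blast
  have x: "?x \<noteq> 0" by simp
  have split_off: "\<exists>S\<subseteq>?I. A = smult (lead_coeff A) (root_poly a S) \<and> B = smult (lead_coeff B) (root_poly a (?I - S))"
    if AB: "A * B = ?x * smult \<kappa> (root_poly a J)" and "?x dvd A" for A B
  proof -
    obtain A' where A: "A = ?x * A'" using \<open>?x dvd A\<close> by (elim dvdE)
    have "A' * B = smult \<kappa> (root_poly a J)"
      using AB unfolding A mult.assoc mult_left_cancel[OF x] .
    then obtain S where S: "S \<subseteq> J" "A' = smult (lead_coeff A') (root_poly a S)"
      "B = smult (lead_coeff B) (root_poly a (J - S))"
      using insert.IH[OF inj _ insert.prems(3)] by blast
    have "finite S" "j \<notin> S" using S(1) insert.hyps finite_subset by blast+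
    then have "A = smult (lead_coeff A') (root_poly a (insert j S))"
      unfolding A root_poly_insert[OF \<open>finite S\<close> \<open>j \<notin> S\<close>] by (subst S(2)) (simp only: mult_smult_right)
    moreover have "lead_coeff A = lead_coeff A'" by (simp only: A lead_coeff_mult) simp
    moreover have "?I - insert j S = J - S" using insert.hyps by blast
    ultimately show ?thesis using S by (metis insert_mono)
  qed
  have AB: "A * B = ?x * smult \<kappa> (root_poly a J)"
    by (simp only: insert.prems(2) root_poly_insert[OF insert.hyps] mult_smult_right)
  have "poly (A * B) (complex_of_real (a j)) = 0" by (simp add: AB)
  then consider "?x dvd A" | "?x dvd B" by (auto simp: poly_eq_0_iff_dvd)
  then show ?case
  proof cases
    case 1
    then show ?thesis using split_off[OF AB] by blast
  next
    case 2
    then obtain S where "S \<subseteq> ?I" "B = smult (lead_coeff B) (root_poly a S)"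
      "A = smult (lead_coeff A) (root_poly a (?I - S))"
      using split_off[of B A] AB by (auto simp: mult.commute)
    moreover have "?I - (?I - S) = S" using \<open>S \<subseteq> ?I\<close> by blast
    ultimately show ?thesis by (metis Diff_subset)
  qed
qed

lemma complex_poly_even_orders_square:
  fixes R :: "complex poly"
  assumes "\<And>z. even (order z R)"
  shows "\<exists>M. R = M^2"
proof (cases "R = 0")
  case False
  define Q where "Q = (\<Prod>z|poly R z = 0. [:-z, 1:] ^ (order z R div 2))"
  have "Q^2 = (\<Prod>z|poly R z = 0. ([:-z, 1:] ^ (order z R div 2))^2)"
    unfolding Q_def by (rule prod_power_distrib)
  also have "\<dots> = (\<Prod>z|poly R z = 0. [:-z, 1:] ^ order z R)"
    using assms by (intro prod.cong) (auto simp: power_mult[symmetric])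
  finally have "R = smult (lead_coeff R) (Q^2)"
    using complex_poly_decompose[of R] by simp
  also have "\<dots> = (smult (csqrt (lead_coeff R)) Q)^2"
    by (simp add: smult_power)
  finally show ?thesis by blast
qed (intro exI[of _ 0], simp)

section \<open>The two affine charts of the cone\<close>

lemma poly_eq_sum_upto:
  fixes p :: "'a::comm_semiring_1 poly"
  shows "degree p \<le> n \<Longrightarrow> poly p x = (\<Sum>k\<le>n. coeff p k * x^k)"
  by (subst poly_as_sum_of_monoms'[symmetric]) (auto simp: poly_sum poly_monom)

lemma poly_eqI_nonzero:
  fixes p q :: "'a::{idom,ring_char_0} poly"
  assumes "\<And>w. w \<noteq> 0 \<Longrightarrow> poly p w = poly q w"
  shows "p = q"
proof (rule ccontr)
  assume "p \<noteq> q"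
  then have "finite {w. poly (p - q) w = 0}" by (intro poly_roots_finite) simp
  moreover have "- {0} \<subseteq> {w. poly (p - q) w = 0}" using assms by auto
  ultimately have "finite (insert 0 (- {0::'a}))" by (simp add: finite_subset)
  moreover have "insert 0 (- {0::'a}) = UNIV" by auto
  ultimately show False using infinite_UNIV_char_0 by metis
qed

text \<open>In the chart \<open>w = 1/z\<close> at the other end of \<open>\<Lambda>\<close> a hyperplane equation \<open>P(z) + c v\<close> of
  degree \<open>n\<close> becomes \<open>w\<^sup>n P(1/w) + c u\<close>.\<close>

definition reverse_poly :: "nat \<Rightarrow> 'a::comm_ring_1 poly \<Rightarrow> 'a poly" where
  "reverse_poly n p = (\<Sum>k\<le>n. monom (coeff p k) (n - k))"

lemma coeff_reverse_poly: "coeff (reverse_poly n p) j = (if j \<le> n then coeff p (n - j) else 0)"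
proof -
  have "coeff (reverse_poly n p) j = (\<Sum>k\<le>n. if k = n - j \<and> j \<le> n then coeff p k else 0)"
    unfolding reverse_poly_def coeff_sum coeff_monom by (intro sum.cong) auto
  then show ?thesis by auto
qed

lemma poly_reverse_poly_0: "poly (reverse_poly n p) 0 = coeff p n"
  by (simp add: poly_0_coeff_0 coeff_reverse_poly)

lemma reverse_poly_diff: "reverse_poly n (p - q) = reverse_poly n p - reverse_poly n q"
  by (rule poly_eqI) (simp add: coeff_reverse_poly)

lemma reverse_poly_smult: "reverse_poly n (smult c p) = smult c (reverse_poly n p)"
  by (rule poly_eqI) (simp add: coeff_reverse_poly)

lemma reverse_poly_eq_0_iff: "degree p \<le> n \<Longrightarrow> reverse_poly n p = 0 \<longleftrightarrow> p = 0"
proof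
  assume "degree p \<le> n" "reverse_poly n p = 0"
  have "coeff p k = 0" for k
  proof (cases "k \<le> n")
    case True
    have "coeff (reverse_poly n p) (n - k) = 0" using \<open>reverse_poly n p = 0\<close> by simp
    then show ?thesis using True by (simp add: coeff_reverse_poly)
  qed (use \<open>degree p \<le> n\<close> in \<open>simp add: coeff_eq_0\<close>)
  then show "p = 0" by (simp add: poly_eqI)
qed (simp add: reverse_poly_def)

lemma poly_reverse_poly_nonzero:
  fixes p :: "'a::field poly"
  assumes "degree p \<le> n" "w \<noteq> 0"
  shows "poly (reverse_poly n p) w = w^n * poly p (inverse w)"
proof -
  have "poly (reverse_poly n p) w = (\<Sum>k\<le>n. w^n * (coeff p k * inverse w ^ k))"
    unfolding reverse_poly_def poly_sum poly_monom using assms(2)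
    by (intro sum.cong) (auto simp: power_diff field_simps)
  also have "\<dots> = w^n * poly p (inverse w)"
    by (simp add: poly_eq_sum_upto[OF assms(1)] sum_distrib_left)
  finally show ?thesis .
qed

lemma reverse_poly_mult:
  fixes p q :: "'a::field_char_0 poly"
  assumes "degree p \<le> m" "degree q \<le> k"
  shows "reverse_poly (m + k) (p * q) = reverse_poly m p * reverse_poly k q"
proof (rule poly_eqI_nonzero)
  fix w :: 'a assume "w \<noteq> 0"
  moreover have "degree (p * q) \<le> m + k" using degree_mult_le[of p q] assms by linarith
  ultimately show "poly (reverse_poly (m + k) (p * q)) w = poly (reverse_poly m p * reverse_poly k q) w"
    using assms by (simp add: poly_reverse_poly_nonzero power_add)
qed

lemma LA_coeff: "degree P \<le> n \<Longrightarrow> LA n (coeff P, c) = hyp_eqn P c"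
  by (simp add: LA_def poly_eq_sum_upto fun_eq_iff)

lemma LB_coeff: "LB n (coeff P, c) = hyp_eqn (reverse_poly n P) c"
  by (simp add: LB_def reverse_poly_def poly_sum poly_monom fun_eq_iff)

lemma SigmaA_eq: "SigmaA n a = curve_eqn (root_poly a {1..2*n})"
  by (simp add: SigmaA_def poly_root_poly fun_eq_iff)

lemma SigmaB_eq: "SigmaB n a = curve_eqn (reverse_poly (2*n) (root_poly a {1..2*n}))"
proof -
  have "(\<Prod>i\<in>{1..2*n}. 1 - complex_of_real (a i) * w) = poly (reverse_poly (2*n) (root_poly a {1..2*n})) w"
    for w
  proof (cases "w = 0")
    case True
    then show ?thesis using lead_coeff_root_poly[of a "{1..2*n}"]
      by (simp add: poly_reverse_poly_0 degree_root_poly)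
  next
    case False
    then have "(\<Prod>i\<in>{1..2*n}. 1 - complex_of_real (a i) * w)
        = (\<Prod>i\<in>{1..2*n}. w * (inverse w - complex_of_real (a i)))"
      by (intro prod.cong) (auto simp: field_simps)
    also have "\<dots> = poly (reverse_poly (2*n) (root_poly a {1..2*n})) w"
      using False by (simp add: prod.distrib poly_reverse_poly_nonzero degree_root_poly poly_root_poly)
    finally show ?thesis .
  qed
  then show ?thesis by (simp add: SigmaB_def fun_eq_iff)
qed

lemma proj_eq_coeff_iff:
  "proj_eq (coeff P, c) (coeff P', c') \<longleftrightarrow> (\<exists>l. l \<noteq> 0 \<and> P' = smult l P \<and> c' = l * c)"
proof -
  have "coeff P' = (\<lambda>k. l * coeff P k) \<longleftrightarrow> P' = smult l P" for l
    by (simp add: poly_eq_iff fun_eq_iff)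
  then show ?thesis by (simp add: proj_eq_def)
qed

lemma real_hyp_coeff_iff:
  "real_hyp n (coeff P, c) \<longleftrightarrow> (\<exists>l. l \<noteq> 0 \<and> map_poly cnj P = smult l P \<and> (-1)^n * cnj c = l * c)"
proof -
  have "(\<forall>k. cnj (coeff P k) = l * coeff P k) \<longleftrightarrow> map_poly cnj P = smult l P" for l
    by (simp add: poly_eq_iff coeff_map_poly)
  then show ?thesis by (simp add: real_hyp_def)
qed

lemma is_hyp_coeff_iff: "is_hyp n (coeff P, c) \<longleftrightarrow> degree P \<le> n \<and> (P \<noteq> 0 \<or> c \<noteq> 0)"
proof -
  have "degree P \<le> n \<longleftrightarrow> (\<forall>k>n. coeff P k = 0)" by (auto intro: degree_le coeff_eq_0)
  moreover have "P \<noteq> 0 \<longleftrightarrow> (\<exists>k\<le>n. coeff P k \<noteq> 0)" if "degree P \<le> n"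
    using that by (auto intro!: exI[of _ "degree P"])
  ultimately show ?thesis unfolding is_hyp_def by auto
qed

lemma is_hyp_imp_coeff:
  assumes "is_hyp n H"
  shows "\<exists>P. degree P \<le> n \<and> H = (coeff P, snd H)"
proof -
  have "coeff (Abs_poly (fst H)) = fst H"
    using assms by (intro coeff_Abs_poly) (auto simp: is_hyp_def)
  then show ?thesis using assms
    by (intro exI[of _ "Abs_poly (fst H)"]) (auto simp: is_hyp_def intro: degree_le)
qed

section \<open>The circle families\<close>

lemma sphere_Re_Im: "t \<in> sphere (0::complex) 1 \<Longrightarrow> Re t ^ 2 + Im t ^ 2 = 1"
  using cmod_power2[of t] by simp

lemma sphere_Im_eq_0: "t \<in> sphere (0::complex) 1 \<Longrightarrow> Im t = 0 \<Longrightarrow> t = 1 \<or> t = -1"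
  using sphere_Re_Im[of t] by (auto simp: complex_eq_iff power2_eq_1_iff)

lemma power2_i_power: "(\<i> ^ n)^2 = ((-1)^n :: complex)"
  by (simp flip: power_mult add: mult.commute[of n] power_mult)

lemma cnj_i_power: "cnj (\<i> ^ n) = (-1)^n * \<i> ^ n"
  by (simp flip: power_mult_distrib)

definition stereographic_point :: "real \<Rightarrow> complex" where
  "stereographic_point r = Complex ((1 - r^2) / (1 + r^2)) (2 * r / (1 + r^2))"

lemma stereographic_point_sphere: "stereographic_point r \<in> sphere 0 1"
proof -
  have pos: "1 + r^2 > 0" by (simp add: add_pos_nonneg)
  have "(1 - r^2)^2 + (2 * r)^2 = (1 + r^2)^2" by (simp add: power2_eq_square algebra_simps)
  then have "((1 - r^2) / (1 + r^2))^2 + (2 * r / (1 + r^2))^2 = 1"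
    using pos by (simp add: power_divide add_divide_distrib[symmetric])
  then show ?thesis by (simp add: stereographic_point_def cmod_def)
qed

definition division_rep :: "nat set set \<Rightarrow> nat set" where
  "division_rep D = (SOME S. S \<in> D)"

lemma division_rep:
  assumes "D \<in> divisions n"
  shows "division_rep D \<subseteq> {1..2*n}" "card (division_rep D) = n"
    "D = {division_rep D, {1..2*n} - division_rep D}"
proof -
  obtain S where S: "D = {S, {1..2*n} - S}" "S \<subseteq> {1..2*n}" "card S = n"
    using assms unfolding divisions_def by blast
  have "division_rep D \<in> D" unfolding division_rep_def using S(1) by (metis insertI1 someI)
  then have rep: "division_rep D = S \<or> division_rep D = {1..2*n} - S" using S(1) by blast
  have compl: "{1..2*n} - ({1..2*n} - S) = S" "card ({1..2*n} - S) = n"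
    using S(2,3) by (auto simp: card_Diff_subset finite_subset)
  show "division_rep D \<subseteq> {1..2*n}" using rep S(2) by blast
  show "card (division_rep D) = n" using rep S(3) compl(2) by auto
  show "D = {division_rep D, {1..2*n} - division_rep D}"
    using rep S(1) compl(1) by (auto simp: insert_commute)
qed

locale hyperelliptic_cone =
  fixes n :: nat and a :: "nat \<Rightarrow> real"
  assumes n_pos: "n \<ge> 1" and inj_a: "inj_on a {1..2*n}"
begin

abbreviation branch_poly :: "complex poly" where
  "branch_poly \<equiv> root_poly a {1..2*n}"

lemma degree_branch_poly: "degree branch_poly = 2 * n"
  by (simp add: degree_root_poly)

lemma coeff_branch_poly_top: "coeff branch_poly (2 * n) = 1"
  by (metis degree_branch_poly lead_coeff_root_poly)

lemma branch_poly_eq_0_iff: "poly branch_poly z = 0 \<longleftrightarrow> (\<exists>j\<in>{1..2*n}. z = complex_of_real (a j))"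
  by (simp add: poly_root_poly_eq_0_iff)

lemma root_poly_at_branch_point_eq_0_iff:
  "S \<subseteq> {1..2*n} \<Longrightarrow> j \<in> {1..2*n} \<Longrightarrow> poly (root_poly a S) (complex_of_real (a j)) = 0 \<longleftrightarrow> j \<in> S"
  using inj_a by (intro poly_root_poly_at_root_eq_0_iff) (auto intro: finite_subset)

lemma square_identity_evenly_tangent:
  assumes P: "degree P \<le> n" and M: "degree M \<le> n" and c: "c \<noteq> 0"
    and id: "P^2 - smult (c^2) branch_poly = M^2"
    and coprime: "\<And>j. j \<in> {1..2*n} \<Longrightarrow> poly M (complex_of_real (a j)) \<noteq> 0"
  shows "evenly_tangent n a (coeff P, c)"
proof -
  have coprime_A: "poly M z \<noteq> 0" if "poly branch_poly z = 0" for z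
    using that coprime unfolding branch_poly_eq_0_iff by blast
  have M0: "M \<noteq> 0" using coprime[of 1] n_pos by auto
  have id_B: "(reverse_poly n P)^2 - smult (c^2) (reverse_poly (2*n) branch_poly) = (reverse_poly n M)^2"
    using arg_cong[OF id, of "reverse_poly (n + n)"] P M
    by (simp add: power2_eq_square reverse_poly_mult reverse_poly_diff reverse_poly_smult mult_2)
  have coprime_B: "poly (reverse_poly n M) w \<noteq> 0" if "poly (reverse_poly (2*n) branch_poly) w = 0" for w
  proof (cases "w = 0")
    case True
    then show ?thesis using that coeff_branch_poly_top by (simp add: poly_reverse_poly_0)
  next
    case False
    then have "poly branch_poly (inverse w) = 0"
      using that by (simp add: poly_reverse_poly_nonzero degree_root_poly)
    then show ?thesis using coprime_A False M by (simp add: poly_reverse_poly_nonzero)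
  qed
  have M0_B: "reverse_poly n M \<noteq> 0" using M0 M by (simp add: reverse_poly_eq_0_iff)
  show ?thesis
    unfolding evenly_tangent_def SigmaA_eq SigmaB_eq LA_coeff[OF P] LB_coeff
    using square_identity_contact[OF id c M0 coprime_A]
      square_identity_contact[OF id_B c M0_B coprime_B] by auto
qed

lemma vertex_evenly_tangent:
  assumes U: "U \<subseteq> {1..2*n}" "card U = n" and \<kappa>: "\<kappa> \<noteq> 0"
  shows "evenly_tangent n a (coeff (smult \<kappa> (root_poly a U)), 0)"
proof -
  have fin: "finite U" using U(1) finite_subset by blast
  have deg: "degree (smult \<kappa> (root_poly a U)) \<le> n" using U fin by (simp add: degree_root_poly)
  have "contact_order (SigmaA n a) (LA n (coeff (smult \<kappa> (root_poly a U)), 0)) (z, v) 2"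
    if on: "SigmaA n a z v = 0" "LA n (coeff (smult \<kappa> (root_poly a U)), 0) z v = 0" for z v
  proof -
    obtain j where j: "j \<in> U" "z = complex_of_real (a j)"
      using on(2) \<kappa> fin by (auto simp: LA_coeff[OF deg] poly_root_poly_eq_0_iff)
    have "poly branch_poly z = 0" unfolding branch_poly_eq_0_iff using j U(1) by blast
    then have "v = 0" using on(1) by (simp add: SigmaA_eq)
    have "order z (smult \<kappa> (root_poly a U)) = 1"
      using order_root_poly[OF _ inj_a U(1) j(1)] \<kappa> j(2) by (simp add: order_smult)
    moreover have "poly (pderiv branch_poly) z \<noteq> 0"
      using pderiv_root_poly_nonzero[OF _ inj_a, of j] j U(1) by auto
    ultimately show ?thesis
      using contact_order_branch_point[OF \<open>poly branch_poly z = 0\<close> _ , of "smult \<kappa> (root_poly a U)"] \<kappa>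
      by (simp add: SigmaA_eq LA_coeff[OF deg] \<open>v = 0\<close>)
  qed
  moreover have "\<not> (SigmaB n a 0 u = 0 \<and> LB n (coeff (smult \<kappa> (root_poly a U)), 0) 0 u = 0)" for u
    using \<kappa> U fin lead_coeff_root_poly[of a U]
    by (simp add: LB_coeff poly_reverse_poly_0 degree_root_poly)
  ultimately show ?thesis unfolding evenly_tangent_def by (meson even_numeral order_refl)
qed

lemma evenly_tangent_avoids_branch_points:
  assumes P: "degree P \<le> n" and c: "c \<noteq> 0" and tan: "evenly_tangent n a (coeff P, c)"
    and j: "j \<in> {1..2*n}"
  shows "poly P (a j) \<noteq> 0"
proof
  assume "poly P (a j) = 0"
  moreover have "poly branch_poly (a j) = 0" unfolding branch_poly_eq_0_iff using j by blast
  ultimately have "curve_eqn branch_poly (a j) 0 = 0 \<and> hyp_eqn P c (a j) 0 = 0" by simp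
  then obtain k where "k \<ge> 2"
    and "contact_order (curve_eqn branch_poly) (hyp_eqn P c) (complex_of_real (a j), 0) k"
    using tan unfolding evenly_tangent_def SigmaA_eq LA_coeff[OF P] by blast
  then show False
    using contact_order_branch_point_less_2[OF c pderiv_root_poly_nonzero[OF _ inj_a j]] by fastforce
qed

lemma evenly_tangent_square_identity:
  assumes P: "degree P \<le> n" and c: "c \<noteq> 0" and tan: "evenly_tangent n a (coeff P, c)"
  shows "\<exists>M. degree M \<le> n \<and> P^2 - smult (c^2) branch_poly = M^2"
proof -
  define R where "R = P^2 - smult (c^2) branch_poly"
  have R_branch: "poly R (a j) \<noteq> 0" if "j \<in> {1..2*n}" for j
  proof -
    have "poly branch_poly (a j) = 0" unfolding branch_poly_eq_0_iff using that by blast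
    then show ?thesis using evenly_tangent_avoids_branch_points[OF P c tan that] by (simp add: R_def)
  qed
  have R0: "R \<noteq> 0" using R_branch[of 1] n_pos by auto
  have "even (order z R)" for z
  proof (cases "poly R z = 0")
    case True
    have f: "poly branch_poly z \<noteq> 0"
      using True R_branch unfolding branch_poly_eq_0_iff by blast
    define v where "v = - poly P z / c"
    have "poly P z ^ 2 = c^2 * poly branch_poly z" using True by (simp add: R_def)
    then have v: "v^2 = poly branch_poly z" "poly P z + c * v = 0"
      using c by (simp_all add: v_def power_divide)
    then have "v \<noteq> 0" using f by auto
    have "curve_eqn branch_poly z v = 0 \<and> hyp_eqn P c z v = 0" using v by simp
    then obtain k where "even k" "contact_order (curve_eqn branch_poly) (hyp_eqn P c) (z, v) k"
      using tan unfolding evenly_tangent_def SigmaA_eq LA_coeff[OF P] by blast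
    then show ?thesis
      using contact_order_offbranch_unique[OF c \<open>v \<noteq> 0\<close> v(2)] R0 by (simp add: R_def)
  qed (simp add: order_0I)
  then obtain M where M: "R = M^2" using complex_poly_even_orders_square by blast
  have "degree R \<le> 2 * n"
    unfolding R_def using P degree_power_le[of P 2]
    by (intro degree_diff_le) (auto simp: degree_root_poly)
  then have "degree M \<le> n" using R0 by (simp add: M degree_power_eq)
  then show ?thesis using M R_def by auto
qed

definition pencil :: "nat set \<Rightarrow> complex \<Rightarrow> complex \<Rightarrow> complex poly" where
  "pencil S \<alpha> \<beta> = smult \<alpha> (root_poly a S) + smult \<beta> (root_poly a ({1..2*n} - S))"

lemma map_poly_cnj_pencil: "map_poly cnj (pencil S \<alpha> \<beta>) = pencil S (cnj \<alpha>) (cnj \<beta>)"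
  by (simp add: poly_eq_poly_eq_iff[symmetric] pencil_def fun_eq_iff)

lemma smult_pencil: "smult l (pencil S \<alpha> \<beta>) = pencil S (l * \<alpha>) (l * \<beta>)"
  by (simp add: pencil_def smult_add_right)

lemma uminus_pencil: "- pencil S \<alpha> \<beta> = pencil S (-\<alpha>) (-\<beta>)"
  by (simp add: pencil_def)

lemma pencil_add_reflect: "pencil S \<alpha> \<beta> + pencil S \<alpha> (-\<beta>) = smult (2 * \<alpha>) (root_poly a S)"
  by (rule poly_eqI) (simp only: pencil_def coeff_add coeff_smult, simp)

lemma pencil_diff_reflect:
  "pencil S \<alpha> \<beta> - pencil S \<alpha> (-\<beta>) = smult (2 * \<beta>) (root_poly a ({1..2*n} - S))"
  by (rule poly_eqI) (simp only: pencil_def coeff_add coeff_diff coeff_smult, simp)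

lemma pencil_swap: "S \<subseteq> {1..2*n} \<Longrightarrow> pencil ({1..2*n} - S) \<beta> \<alpha> = pencil S \<alpha> \<beta>"
  by (simp add: pencil_def double_diff add.commute)

lemma pencil_pair_eqD:
  assumes A: "A \<subseteq> {1..2*n}" and T: "T \<subseteq> {1..2*n}" and nz: "\<alpha>' \<noteq> 0 \<or> \<beta>' \<noteq> 0"
    and eq: "pencil T \<alpha>' \<beta>' = smult l (pencil A \<alpha> \<beta>)"
      "pencil T \<alpha>' (-\<beta>') = smult l (pencil A \<alpha> (-\<beta>))"
  shows "T = A"
proof -
  have fin: "finite {1..2*n}" by simp
  have \<alpha>: "smult (2 * \<alpha>') (root_poly a T) = smult (2 * (l * \<alpha>)) (root_poly a A)"
    using arg_cong2[OF eq, of "(+)"] by (simp add: pencil_add_reflect smult_pencil flip: smult_add_right)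
  have \<beta>: "smult (2 * \<beta>') (root_poly a ({1..2*n} - T)) = smult (2 * (l * \<beta>)) (root_poly a ({1..2*n} - A))"
    using arg_cong2[OF eq, of "(-)"] by (simp add: pencil_diff_reflect smult_pencil flip: smult_diff_right)
  show ?thesis
  proof (cases "\<alpha>' = 0")
    case False
    then show ?thesis using smult_root_poly_eqD[OF fin inj_a T A _ \<alpha>] by simp
  next
    case True
    then have "{1..2*n} - T = {1..2*n} - A"
      using nz smult_root_poly_eqD[OF fin inj_a _ _ _ \<beta>] by simp
    then show ?thesis using A T by (metis double_diff order_refl)
  qed
qed

lemma square_identity_split:
  assumes P: "degree P \<le> n" and M: "degree M \<le> n" and c: "c \<noteq> 0"
    and id: "P^2 - smult (c^2) branch_poly = M^2"
  shows "\<exists>S \<alpha> \<beta>. S \<subseteq> {1..2*n} \<and> card S = n \<and> P = pencil S \<alpha> \<beta> \<and> c^2 = 4 * \<alpha> * \<beta>"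
proof -
  define A where "A = P + M"
  define B where "B = P - M"
  have AB: "A * B = smult (c^2) branch_poly"
  proof -
    have "A * B = P^2 - M^2" by (simp add: A_def B_def power2_eq_square algebra_simps)
    then show ?thesis by (simp add: id[symmetric])
  qed
  obtain S where "S \<subseteq> {1..2*n}" "A = smult (lead_coeff A) (root_poly a S)"
    "B = smult (lead_coeff B) (root_poly a ({1..2*n} - S))"
    using mult_eq_smult_root_poly_split[OF _ inj_a AB] c by auto
  moreover have "A \<noteq> 0" "B \<noteq> 0" using AB c by auto
  ultimately obtain \<alpha>0 \<beta>0 where S: "S \<subseteq> {1..2*n}" "A = smult \<alpha>0 (root_poly a S)"
    "B = smult \<beta>0 (root_poly a ({1..2*n} - S))" and lc: "\<alpha>0 \<noteq> 0" "\<beta>0 \<noteq> 0"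
    by (metis leading_coeff_0_iff)
  have fin: "finite S" using S(1) finite_subset by blast
  have "card S \<le> n"
    using degree_add_le[OF P M] lc(1) fin by (simp add: A_def[symmetric] S(2) degree_root_poly)
  moreover have "card ({1..2*n} - S) \<le> n"
    using degree_diff_le[OF P M] lc(2) by (simp add: B_def[symmetric] S(3) degree_root_poly)
  moreover have "card S + card ({1..2*n} - S) = 2 * n"
    using S(1) fin card_mono[OF _ S(1)] by (simp add: card_Diff_subset)
  ultimately have card: "card S = n" by linarith
  have "P = smult (1/2) (A + B)"
    by (rule poly_eqI) (simp only: A_def B_def coeff_smult coeff_add coeff_diff, simp)
  then have pencil: "P = pencil S (\<alpha>0 / 2) (\<beta>0 / 2)"
    by (simp add: S pencil_def smult_add_right)
  have "smult (c^2) branch_poly = smult (\<beta>0 * \<alpha>0) branch_poly"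
    using AB root_poly_mult_complement[OF S(1), of a] by (simp add: S)
  from smult_root_poly_eqD[OF _ inj_a order_refl order_refl _ this]
  have "c^2 = \<beta>0 * \<alpha>0" using c by simp
  then show ?thesis using S(1) card pencil by (intro exI[of _ S] exI) auto
qed

text \<open>For a real hyperplane, \<open>\<alpha>\<close>, \<open>(-1)\<^sup>n \<beta>\<close> and \<open>\<gamma> / \<i>\<^sup>n\<close> are real up to a common factor, and
  \<open>\<gamma>\<^sup>2 = 4 \<alpha> \<beta>\<close> becomes the equation of a circle; \<open>(\<alpha>, \<beta>, \<gamma>) = (1 + x, (-1)\<^sup>n (1 - x), 2 \<i>\<^sup>n y)\<close>
  parametrizes it by \<open>x + \<i> y\<close> on the unit circle.\<close>

definition circle_alpha :: "complex \<Rightarrow> complex" where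
  "circle_alpha t = 1 + complex_of_real (Re t)"

definition circle_beta :: "complex \<Rightarrow> complex" where
  "circle_beta t = (-1)^n * (1 - complex_of_real (Re t))"

definition circle_gamma :: "complex \<Rightarrow> complex" where
  "circle_gamma t = 2 * \<i>^n * complex_of_real (Im t)"

definition circle_hyp :: "nat set \<Rightarrow> complex \<Rightarrow> hyp" where
  "circle_hyp S t = (coeff (pencil S (circle_alpha t) (circle_beta t)), circle_gamma t)"

lemma circle_params_not_both_0: "circle_alpha t \<noteq> 0 \<or> circle_beta t \<noteq> 0"
  by (auto simp: circle_alpha_def circle_beta_def complex_eq_iff)

lemma circle_gamma_square: "t \<in> sphere 0 1 \<Longrightarrow> circle_gamma t ^ 2 = 4 * circle_alpha t * circle_beta t"
proof -
  assume "t \<in> sphere 0 1"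
  then have "Im t ^ 2 = 1 - Re t ^ 2" using sphere_Re_Im[of t] by simp
  then have "complex_of_real (Im t) ^ 2 = 1 - complex_of_real (Re t) ^ 2"
    by (metis of_real_1 of_real_diff of_real_power)
  have "circle_gamma t ^ 2 = 4 * (\<i>^n)^2 * complex_of_real (Im t) ^ 2"
    by (simp add: circle_gamma_def power_mult_distrib)
  also have "\<dots> = 4 * (-1)^n * (1 - complex_of_real (Re t) ^ 2)"
    by (simp only: power2_i_power \<open>complex_of_real (Im t) ^ 2 = 1 - complex_of_real (Re t) ^ 2\<close>)
  also have "\<dots> = 4 * circle_alpha t * circle_beta t"
    by (simp add: circle_alpha_def circle_beta_def power2_eq_square algebra_simps)
  finally show ?thesis .
qed

lemma circle_hyp_one: "circle_hyp S 1 = (coeff (smult 2 (root_poly a S)), 0)"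
  by (simp add: circle_hyp_def pencil_def circle_alpha_def circle_beta_def circle_gamma_def)

lemma circle_hyp_minus_one:
  "circle_hyp S (-1) = (coeff (smult (2 * (-1)^n) (root_poly a ({1..2*n} - S))), 0)"
  by (simp add: circle_hyp_def pencil_def circle_alpha_def circle_beta_def circle_gamma_def mult.commute)

lemma circle_hyp_continuous:
  "(\<forall>k. continuous_on (sphere 0 1) (\<lambda>t. fst (circle_hyp S t) k))
    \<and> continuous_on (sphere 0 1) (\<lambda>t. snd (circle_hyp S t))"
  unfolding circle_hyp_def pencil_def circle_alpha_def circle_beta_def circle_gamma_def
    fst_conv snd_conv coeff_add coeff_smult
  by (intro conjI allI continuous_intros)

lemma circle_hyp_real: "real_hyp n (circle_hyp S t)"
proof -
  have "(-1)^n * cnj (circle_gamma t) = circle_gamma t"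
    by (simp add: circle_gamma_def cnj_i_power mult_ac flip: power_mult_distrib)
  then show ?thesis
    unfolding circle_hyp_def real_hyp_coeff_iff map_poly_cnj_pencil
    by (intro exI[of _ 1]) (simp add: circle_alpha_def circle_beta_def)
qed

context
  fixes S assumes S: "S \<subseteq> {1..2*n}" "card S = n"
begin

lemma card_complement: "card ({1..2*n} - S) = n"
  using S by (simp add: card_Diff_subset finite_subset)

lemma half_nonempty: "S \<noteq> {}" "{1..2*n} - S \<noteq> {}"
  using S card_complement n_pos by auto

lemma degree_pencil: "degree (pencil S \<alpha> \<beta>) \<le> n"
  unfolding pencil_def using S card_complement
  by (intro degree_add_le order.trans[OF degree_smult_le]) (auto simp: degree_root_poly finite_subset)

lemma pencil_square_identity:
  "(pencil S \<alpha> \<beta>)^2 - smult (4 * \<alpha> * \<beta>) branch_poly = (pencil S \<alpha> (-\<beta>))^2"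
proof -
  have "poly branch_poly z = poly (root_poly a S) z * poly (root_poly a ({1..2*n} - S)) z" for z
    using root_poly_mult_complement[OF S(1), of a] by (metis finite_atLeastAtMost poly_mult)
  then show ?thesis
    unfolding poly_eq_poly_eq_iff[symmetric] fun_eq_iff
    by (simp add: pencil_def power2_eq_square algebra_simps)
qed

lemma poly_pencil_complement:
  "j \<in> {1..2*n} - S \<Longrightarrow> poly (pencil S \<alpha> \<beta>) (a j) = \<alpha> * poly (root_poly a S) (a j)"
  using root_poly_at_branch_point_eq_0_iff[of "{1..2*n} - S" j] by (simp add: pencil_def)

lemma poly_pencil_half:
  "j \<in> S \<Longrightarrow> poly (pencil S \<alpha> \<beta>) (a j) = \<beta> * poly (root_poly a ({1..2*n} - S)) (a j)"
  using root_poly_at_branch_point_eq_0_iff[of S j] S by (auto simp: pencil_def)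

lemma pencil_eq_iff: "pencil S \<alpha> \<beta> = pencil S \<alpha>' \<beta>' \<longleftrightarrow> \<alpha> = \<alpha>' \<and> \<beta> = \<beta>'"
proof
  assume eq: "pencil S \<alpha> \<beta> = pencil S \<alpha>' \<beta>'"
  obtain i j where i: "i \<in> {1..2*n} - S" and j: "j \<in> S" using half_nonempty by blast
  have "\<alpha> * poly (root_poly a S) (a i) = \<alpha>' * poly (root_poly a S) (a i)"
    using eq poly_pencil_complement[OF i] by metis
  moreover have "\<beta> * poly (root_poly a ({1..2*n} - S)) (a j) = \<beta>' * poly (root_poly a ({1..2*n} - S)) (a j)"
    using eq poly_pencil_half[OF j] by metis
  ultimately show "\<alpha> = \<alpha>' \<and> \<beta> = \<beta>'"
    using i j S(1) root_poly_at_branch_point_eq_0_iff by auto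
qed simp

lemma pencil_eq_0_iff: "pencil S \<alpha> \<beta> = 0 \<longleftrightarrow> \<alpha> = 0 \<and> \<beta> = 0"
  using pencil_eq_iff[of \<alpha> \<beta> 0 0] by (simp add: pencil_def)

lemma circle_hyp_is_hyp: "is_hyp n (circle_hyp S t)"
  unfolding circle_hyp_def is_hyp_coeff_iff pencil_eq_0_iff
  using degree_pencil circle_params_not_both_0 by blast

lemma vertex_hyp_circle_hyp:
  "proj_eq (vertex_hyp n a S) (circle_hyp S 1)"
  "proj_eq (vertex_hyp n a ({1..2*n} - S)) (circle_hyp S (-1))"
  unfolding circle_hyp_one circle_hyp_minus_one vertex_hyp_def root_poly_def[symmetric] proj_eq_coeff_iff
  by (intro exI[of _ 2] exI[of _ "2 * (-1)^n"]; simp)+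

lemma circle_hyp_evenly_tangent:
  assumes t: "t \<in> sphere 0 1"
  shows "evenly_tangent n a (circle_hyp S t)"
proof (cases "Im t = 0")
  case True
  then consider "t = 1" | "t = -1" using sphere_Im_eq_0[OF t] by blast
  then show ?thesis
  proof cases
    case 1
    then show ?thesis using vertex_evenly_tangent[OF S, of 2] by (simp add: circle_hyp_one)
  next
    case 2
    then show ?thesis
      using vertex_evenly_tangent[of "{1..2*n} - S" "2 * (-1)^n"] card_complement
      by (simp add: circle_hyp_minus_one)
  qed
next
  case False
  let ?\<alpha> = "circle_alpha t" and ?\<beta> = "circle_beta t" and ?\<gamma> = "circle_gamma t"
  have "Re t \<noteq> 1" "Re t \<noteq> -1" using sphere_Re_Im[OF t] False by auto
  then have \<alpha>\<beta>: "?\<alpha> \<noteq> 0" "?\<beta> \<noteq> 0" by (auto simp: circle_alpha_def circle_beta_def complex_eq_iff)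
  have \<gamma>: "?\<gamma> \<noteq> 0" using False by (simp add: circle_gamma_def)
  have id: "(pencil S ?\<alpha> ?\<beta>)^2 - smult (?\<gamma>^2) branch_poly = (pencil S ?\<alpha> (-?\<beta>))^2"
    using pencil_square_identity circle_gamma_square[OF t] by simp
  have "poly (pencil S ?\<alpha> (-?\<beta>)) (a j) \<noteq> 0" if "j \<in> {1..2*n}" for j
    using that \<alpha>\<beta> S(1) root_poly_at_branch_point_eq_0_iff
    by (cases "j \<in> S") (auto simp: poly_pencil_half poly_pencil_complement)
  then show ?thesis
    unfolding circle_hyp_def
    by (rule square_identity_evenly_tangent[OF degree_pencil degree_pencil \<gamma> id])
qed

lemma circle_hyp_proj_eq_same_half:
  assumes "proj_eq (circle_hyp S t) (circle_hyp S t')"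
  shows "t = t'"
proof -
  let ?x = "complex_of_real (Re t)" and ?x' = "complex_of_real (Re t')"
  obtain l where l: "pencil S (circle_alpha t') (circle_beta t') = pencil S (l * circle_alpha t) (l * circle_beta t)"
    and \<gamma>: "circle_gamma t' = l * circle_gamma t"
    using assms unfolding circle_hyp_def proj_eq_coeff_iff smult_pencil by metis
  then have e: "1 + ?x' = l * (1 + ?x)" "1 - ?x' = l * (1 - ?x)"
    unfolding pencil_eq_iff by (auto simp: circle_alpha_def circle_beta_def)
  then have "(1 + ?x') + (1 - ?x') = l * (1 + ?x) + l * (1 - ?x)" by simp
  then have "l = 1" by (simp add: algebra_simps)
  then have "Re t' = Re t" "Im t' = Im t" using e(1) \<gamma> by (simp_all add: circle_gamma_def)
  then show ?thesis by (simp add: complex_eq_iff)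
qed

end

lemma circle_hyp_proj_eq_halves:
  assumes S: "S \<subseteq> {1..2*n}" "card S = n" and T: "T \<subseteq> {1..2*n}" "card T = n"
    and t: "t \<in> sphere 0 1" "t' \<in> sphere 0 1"
    and eq: "proj_eq (circle_hyp S t) (circle_hyp T t')"
  shows "T = S \<or> T = {1..2*n} - S"
proof -
  let ?\<alpha> = "circle_alpha t" and ?\<beta> = "circle_beta t" and ?\<gamma> = "circle_gamma t"
  let ?\<alpha>' = "circle_alpha t'" and ?\<beta>' = "circle_beta t'" and ?\<gamma>' = "circle_gamma t'"
  obtain l where P: "pencil T ?\<alpha>' ?\<beta>' = smult l (pencil S ?\<alpha> ?\<beta>)" and \<gamma>: "?\<gamma>' = l * ?\<gamma>"
    using eq unfolding circle_hyp_def proj_eq_coeff_iff by blast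
  have "(pencil T ?\<alpha>' (-?\<beta>'))^2 = (pencil T ?\<alpha>' ?\<beta>')^2 - smult (?\<gamma>'^2) branch_poly"
    using pencil_square_identity[OF T] circle_gamma_square[OF t(2)] by simp
  also have "\<dots> = smult (l^2) ((pencil S ?\<alpha> ?\<beta>)^2 - smult (?\<gamma>^2) branch_poly)"
    by (simp add: P \<gamma> smult_power smult_diff_right power_mult_distrib)
  also have "\<dots> = (smult l (pencil S ?\<alpha> (-?\<beta>)))^2"
    using pencil_square_identity[OF S] circle_gamma_square[OF t(1)] by (simp add: smult_power)
  finally have "pencil T ?\<alpha>' (-?\<beta>') = smult l (pencil S ?\<alpha> (-?\<beta>))
      \<or> pencil T ?\<alpha>' (-?\<beta>') = - smult l (pencil S ?\<alpha> (-?\<beta>))"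
    unfolding power2_eq_iff .
  moreover have "- smult l (pencil S ?\<alpha> (-?\<beta>)) = smult l (pencil ({1..2*n} - S) ?\<beta> (-?\<alpha>))"
    using pencil_swap[OF S(1)] by (simp add: uminus_pencil flip: smult_minus_right)
  ultimately consider "pencil T ?\<alpha>' (-?\<beta>') = smult l (pencil S ?\<alpha> (-?\<beta>))"
    | "pencil T ?\<alpha>' (-?\<beta>') = smult l (pencil ({1..2*n} - S) ?\<beta> (-?\<alpha>))"
    by (elim disjE) auto
  then show ?thesis
  proof cases
    case 1
    then show ?thesis using pencil_pair_eqD[OF S(1) T(1) circle_params_not_both_0 P] by blast
  next
    case 2
    have "pencil T ?\<alpha>' ?\<beta>' = smult l (pencil ({1..2*n} - S) ?\<beta> ?\<alpha>)"
      using P pencil_swap[OF S(1)] by simp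
    then show ?thesis using pencil_pair_eqD[OF _ T(1) circle_params_not_both_0 _ 2] by blast
  qed
qed

lemma real_pencil_normal_form:
  assumes S: "S \<subseteq> {1..2*n}" "card S = n"
    and real: "real_hyp n (coeff (pencil S \<alpha> \<beta>), c)" and c: "c \<noteq> 0" "c^2 = 4 * \<alpha> * \<beta>"
  obtains r :: real where "\<alpha> \<noteq> 0" "\<beta> = (-1)^n * complex_of_real r ^ 2 * \<alpha>"
    "c = 2 * \<i>^n * complex_of_real r * \<alpha>"
proof -
  obtain l where l: "pencil S (cnj \<alpha>) (cnj \<beta>) = pencil S (l * \<alpha>) (l * \<beta>)" "(-1)^n * cnj c = l * c"
    and l0: "l \<noteq> 0"
    using real unfolding real_hyp_coeff_iff map_poly_cnj_pencil smult_pencil by blast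
  then have cnj_\<alpha>: "cnj \<alpha> = l * \<alpha>" using pencil_eq_iff[OF S] by blast
  have \<alpha>: "\<alpha> \<noteq> 0" using c by auto
  have sign: "(-1::complex)^n * (-1)^n = 1" by (simp flip: power_add add: mult_2[symmetric])
  then have cnj_c: "cnj c = (-1)^n * l * c" using l(2) by (metis mult.assoc mult_1)
  define \<tau> where "\<tau> = c / (2 * \<i>^n * \<alpha>)"
  have "cnj \<tau> = cnj c / (2 * cnj (\<i>^n) * cnj \<alpha>)" by (simp add: \<tau>_def)
  also have "\<dots> = ((-1)^n * l * c) / (2 * ((-1)^n * \<i>^n) * (l * \<alpha>))"
    unfolding cnj_c cnj_\<alpha> cnj_i_power ..
  also have "\<dots> = \<tau>" using l0 by (simp add: \<tau>_def field_simps)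
  finally have "cnj \<tau> = \<tau>" .
  then obtain r where r: "\<tau> = complex_of_real r" by (metis Reals_cases Reals_cnj_iff)
  then have c_r: "c = 2 * \<i>^n * complex_of_real r * \<alpha>" using \<alpha> by (simp add: \<tau>_def field_simps)
  then have "4 * \<alpha> * \<beta> = 4 * \<alpha> * ((-1)^n * complex_of_real r ^ 2 * \<alpha>)"
    using c(2) by (simp add: power2_eq_square power2_i_power[unfolded power2_eq_square] algebra_simps)
      (metis)
  then show ?thesis using that \<alpha> c_r by simp
qed

lemma pencil_normal_form_on_circle:
  assumes "\<alpha> \<noteq> 0"
  shows "proj_eq (coeff (pencil S \<alpha> ((-1)^n * complex_of_real r ^ 2 * \<alpha>)), 2 * \<i>^n * complex_of_real r * \<alpha>)
    (circle_hyp S (stereographic_point r))"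
proof -
  let ?R = "complex_of_real r ^ 2" and ?t = "stereographic_point r"
  define l where "l = 2 / (1 + ?R) / \<alpha>"
  have "1 + ?R = complex_of_real (1 + r^2)" by simp
  moreover have "1 + r^2 \<noteq> 0" using add_pos_nonneg[OF zero_less_one zero_le_power2[of r]] by linarith
  ultimately have pos: "1 + ?R \<noteq> 0" by (simp only: of_real_eq_0_iff) simp
  have x: "complex_of_real (Re ?t) = (1 - ?R) / (1 + ?R)"
    and y: "complex_of_real (Im ?t) = 2 * complex_of_real r / (1 + ?R)"
    by (simp_all add: stereographic_point_def)
  have "circle_alpha ?t = 2 / (1 + ?R)" "circle_beta ?t = (-1)^n * (2 * ?R / (1 + ?R))"
    using pos by (simp_all add: circle_alpha_def circle_beta_def x field_simps)
  moreover have "circle_gamma ?t = 2 * \<i>^n * (2 * complex_of_real r / (1 + ?R))"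
    by (simp add: circle_gamma_def y)
  ultimately have "circle_alpha ?t = l * \<alpha>" "circle_beta ?t = l * ((-1)^n * ?R * \<alpha>)"
    "circle_gamma ?t = l * (2 * \<i>^n * complex_of_real r * \<alpha>)"
    using assms by (simp_all add: l_def)
  moreover have "l \<noteq> 0" using assms pos by (simp add: l_def)
  ultimately show ?thesis
    unfolding circle_hyp_def proj_eq_coeff_iff smult_pencil by auto
qed

lemma real_pencil_on_circle:
  assumes "S \<subseteq> {1..2*n}" "card S = n"
    and "real_hyp n (coeff (pencil S \<alpha> \<beta>), c)" "c \<noteq> 0" "c^2 = 4 * \<alpha> * \<beta>"
  shows "\<exists>t\<in>sphere 0 1. proj_eq (coeff (pencil S \<alpha> \<beta>), c) (circle_hyp S t)"
proof -
  obtain r where "\<alpha> \<noteq> 0" "\<beta> = (-1)^n * complex_of_real r ^ 2 * \<alpha>"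
    "c = 2 * \<i>^n * complex_of_real r * \<alpha>"
    by (rule real_pencil_normal_form[OF assms])
  then show ?thesis
    using pencil_normal_form_on_circle[of \<alpha> S r] stereographic_point_sphere by auto
qed

lemma division_circle_hyp:
  assumes "D \<in> divisions n" "t \<in> sphere 0 1"
  shows "is_hyp n (circle_hyp (division_rep D) t) \<and> real_hyp n (circle_hyp (division_rep D) t)
    \<and> evenly_tangent n a (circle_hyp (division_rep D) t)"
  using circle_hyp_is_hyp[OF division_rep(1,2)[OF assms(1)]] circle_hyp_real
    circle_hyp_evenly_tangent[OF division_rep(1,2)[OF assms(1)] assms(2)] by simp

lemma division_circle_hyp_inj:
  assumes D: "D \<in> divisions n" "D' \<in> divisions n" and t: "t \<in> sphere 0 1" "t' \<in> sphere 0 1"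
    and eq: "proj_eq (circle_hyp (division_rep D) t) (circle_hyp (division_rep D') t')"
  shows "D = D' \<and> t = t'"
proof -
  note S = division_rep[OF D(1)] and T = division_rep[OF D(2)]
  have "division_rep D' = division_rep D \<or> division_rep D' = {1..2*n} - division_rep D"
    using circle_hyp_proj_eq_halves[OF S(1,2) T(1,2) t eq] .
  then have "D' = D"
  proof
    assume rep: "division_rep D' = {1..2*n} - division_rep D"
    have "{1..2*n} - ({1..2*n} - division_rep D) = division_rep D" using S(1) by blast
    then have "D' = {{1..2*n} - division_rep D, division_rep D}" by (subst T(3)) (simp only: rep)
    also have "\<dots> = D" by (subst S(3)) (rule insert_commute)
    finally show ?thesis .
  qed (use S(3) T(3) in simp)
  then show ?thesis using circle_hyp_proj_eq_same_half[OF S(1,2)] eq by auto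
qed

lemma division_vertex_hyp:
  assumes "D \<in> divisions n" "S \<in> D"
  shows "\<exists>t\<in>sphere 0 1. proj_eq (vertex_hyp n a S) (circle_hyp (division_rep D) t)"
proof -
  note R = division_rep[OF assms(1)]
  have "S = division_rep D \<or> S = {1..2*n} - division_rep D" using assms(2) R(3) by blast
  then show ?thesis
  proof
    assume "S = division_rep D"
    then show ?thesis using vertex_hyp_circle_hyp(1)[OF R(1,2)] by (intro bexI[of _ 1]) auto
  next
    assume "S = {1..2*n} - division_rep D"
    then show ?thesis using vertex_hyp_circle_hyp(2)[OF R(1,2)] by (intro bexI[of _ "-1"]) auto
  qed
qed

lemma division_circle_hyp_complete:
  assumes H: "is_hyp n H" "real_hyp n H" "evenly_tangent n a H" "snd H \<noteq> 0"
  shows "\<exists>D\<in>divisions n. \<exists>t\<in>sphere 0 1. proj_eq H (circle_hyp (division_rep D) t)"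
proof -
  obtain P c where P: "degree P \<le> n" and HP: "H = (coeff P, c)"
    using is_hyp_imp_coeff[OF H(1)] by blast
  have real: "real_hyp n (coeff P, c)" and c: "c \<noteq> 0" using H(2,4) unfolding HP by simp_all
  obtain M where "degree M \<le> n" "P^2 - smult (c^2) branch_poly = M^2"
    using evenly_tangent_square_identity[OF P c] H(3) unfolding HP by blast
  then obtain S \<alpha> \<beta> where S: "S \<subseteq> {1..2*n}" "card S = n" "P = pencil S \<alpha> \<beta>" "c^2 = 4 * \<alpha> * \<beta>"
    using square_identity_split[OF P _ c] by blast
  define D where "D = {S, {1..2*n} - S}"
  have D: "D \<in> divisions n" unfolding D_def divisions_def using S by blast
  note R = division_rep[OF D]
  have "division_rep D \<in> D" using R(3) by blast
  then have "division_rep D = S \<or> division_rep D = {1..2*n} - S" by (simp add: D_def)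
  then have "\<exists>\<alpha> \<beta>. P = pencil (division_rep D) \<alpha> \<beta> \<and> c^2 = 4 * \<alpha> * \<beta>"
  proof
    assume "division_rep D = {1..2*n} - S"
    then show ?thesis using S pencil_swap[OF S(1)] by (intro exI[of _ \<beta>] exI[of _ \<alpha>]) (simp add: mult_ac)
  qed (use S in blast)
  then obtain \<alpha>' \<beta>' where PD: "P = pencil (division_rep D) \<alpha>' \<beta>'" and c2: "c^2 = 4 * \<alpha>' * \<beta>'" by blast
  have "real_hyp n (coeff (pencil (division_rep D) \<alpha>' \<beta>'), c)" using real unfolding PD .
  then obtain t where "t \<in> sphere 0 1" "proj_eq H (circle_hyp (division_rep D) t)"
    using real_pencil_on_circle[OF R(1,2) _ c c2] unfolding HP PD by blast
  then show ?thesis using D by blast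
qed

end

theorem proposition5p9:
  fixes n :: nat and a :: "nat \<Rightarrow> real"
  assumes "n \<ge> 2"
    and "\<forall>i j. 1 \<le> i \<and> i < j \<and> j \<le> 2*n \<longrightarrow> a i < a j"
  shows "\<exists>F :: nat set set \<Rightarrow> complex \<Rightarrow> hyp.
    (\<forall>D\<in>divisions n. \<forall>t\<in>sphere 0 1.
        is_hyp n (F D t) \<and> real_hyp n (F D t) \<and> evenly_tangent n a (F D t)) \<and>
    (\<forall>D\<in>divisions n. (\<forall>k. continuous_on (sphere 0 1) (\<lambda>t. fst (F D t) k)) \<and>
                      continuous_on (sphere 0 1) (\<lambda>t. snd (F D t))) \<and>
    (\<forall>D\<in>divisions n. \<forall>D'\<in>divisions n. \<forall>t\<in>sphere 0 1. \<forall>t'\<in>sphere 0 1.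
        proj_eq (F D t) (F D' t') \<longrightarrow> D = D' \<and> t = t') \<and>
    (\<forall>D\<in>divisions n. \<forall>S\<in>D. \<exists>t\<in>sphere 0 1. proj_eq (vertex_hyp n a S) (F D t)) \<and>
    (\<forall>H. is_hyp n H \<and> real_hyp n H \<and> evenly_tangent n a H \<and> snd H \<noteq> 0 \<longrightarrow>
        (\<exists>D\<in>divisions n. \<exists>t\<in>sphere 0 1. proj_eq H (F D t)))"
proof -
  have "strict_mono_on {1..2*n} a" using assms(2) by (auto simp: strict_mono_on_def)
  then interpret hyperelliptic_cone n a
    using assms(1) by unfold_locales (auto dest: strict_mono_on_imp_inj_on)
  show ?thesis
    by (intro exI[of _ "\<lambda>D. circle_hyp (division_rep D)"] conjI ballI allI impI)
      (auto simp: division_circle_hyp circle_hyp_continuous division_vertex_hyp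
        dest: division_circle_hyp_inj intro!: division_circle_hyp_complete)
qed

end
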